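(* Fix an iteration index $t$ and an agent $p$. Let $w^{t+1},\lambda^t_p,z^t_p\in\mathbb{R}^{J\times K}$, $\rho^t>0$ and $\delta^t>0$ be given and independent of the data. For a dataset $\mathcal{D}$ and $\xi\in\mathbb{R}^{J\times K}$ put $$G^t(z;\mathcal{D},\xi)=\langle f'_p(z^t_p;\mathcal{D}),z\rangle+\tfrac{\rho^t}{2}\big\|w^{t+1}-z+\tfrac{1}{\rho^t}(\lambda^t_p-\xi)\big\|^2,$$ and let $$z^{t+1}_p(\mathcal{D})=\operatorname{argmin}_{z\in\mathcal{W}\cap\widehat{\mathcal{W}}^t_p}\ G^t(z;\mathcal{D},\tilde\xi^t_p),\qquad \widehat{\mathcal{W}}^t_p=\{z\in\mathbb{R}^{J\times K}:\|z-z^t_p\|\le\delta^t\},$$ where $\tilde\xi^t_p$ has i.i.d. Laplace entries with mean $0$ and scale $\bar\Delta^t_p/\bar\epsilon$ (joint density proportional to $\exp(-\bar\epsilon\|\tilde\xi^t_p\|_1/\bar\Delta^t_p)$), with $\bar\epsilon>0$ and $\bar\Delta^t_p=\max_{\mathcal{D}'_p\in\widehat{\mathcal{D}}_p}\|f'_p(z^t_p;\mathcal{D}_p)-f'_p(z^t_p;\mathcal{D}'_p)\|_1$, the same noise distribution being used for $\mathcal{D}_p$ and its neighbours. Then for all measurable $\mathcal{S}\subset\mathbb{R}^{J\times K}$ and all $\mathcal{D}'_p\in\widehat{\mathcal{D}}_p$, $$e^{-\bar\epsilon}\,\mathbb{P}(z^{t+1}_p(\mathcal{D}'_p)\in\mathcal{S})\le\mathbb{P}(z^{t+1}_p(\mathcal{D}_p)\in\mathcal{S})\le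 e^{\bar\epsilon}\,\mathbb{P}(z^{t+1}_p(\mathcal{D}'_p)\in\mathcal{S}).$$
   Context: Setting: $P,J,K$ positive integers; $\mathbb{R}^{J\times K}$ carries the Frobenius inner product and norm $\|\cdot\|$; $\|\cdot\|_1$ is the entrywise $\ell_1$-norm. Agent $p$ holds $\mathcal{D}_p=\{(x_{pi},y_{pi})\}_{i=1}^{I_p}$, $x_{pi}\in\mathbb{R}^J$, $y_{pi}\in\mathbb{R}^K$, $I=\sum_pI_p$. With a convex loss $\varphi(\cdot;x,y)$ and convex regularizer $r$ on $\mathbb{R}^{J\times K}$ and $\beta>0$, $f_p(z;\mathcal{D}_p)=\frac1I\sum_{i=1}^{I_p}\varphi(z;x_{pi},y_{pi})+\frac\beta Pr(z)$, and $f'_p(z;\mathcal{D})$ is a fixed subgradient of $f_p(\cdot;\mathcal{D})$ at $z$. $\mathcal{W}\subset\mathbb{R}^{J\times K}$ is compact convex, and $\mathcal{W}\cap\widehat{\mathcal{W}}^t_p=\{z:h^t_m(z)\le0,\ m\in[M]\}$ with each $h^t_m$ convex and twice continuously differentiable. $\widehat{\mathcal{D}}_p$ is the collection of datasets differing from $\mathcal{D}_p$ in a single entry. *)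

theory Defs
  imports "HOL-Probability.Probability"
begin

text \<open>Matrices in R^(J x K) are modelled as real^'k^'j (rows indexed by 'j).
  The HOL-Analysis inner product / norm on this type are the Frobenius ones.\<close>

definition l1norm :: "real^'k^'j \<Rightarrow> real" where
  "l1norm A = (\<Sum>i\<in>UNIV. \<Sum>k\<in>UNIV. \<bar>A $ i $ k\<bar>)"

definition local_obj ::
  "nat \<Rightarrow> nat \<Rightarrow> real \<Rightarrow> (real^'k^'j \<Rightarrow> real^'j \<Rightarrow> real^'k \<Rightarrow> real)
   \<Rightarrow> (real^'k^'j \<Rightarrow> real) \<Rightarrow> ((real^'j) \<times> (real^'k)) list \<Rightarrow> real^'k^'j \<Rightarrow> real" where
  "local_obj I P \<beta> \<phi> r D z =
     (1 / real I) * sum_list (map (\<lambda>(x, y). \<phi> z x y) D) + \<beta> / real P * r z"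

definition is_subgradient :: "('a::real_inner \<Rightarrow> real) \<Rightarrow> 'a \<Rightarrow> 'a \<Rightarrow> bool" where
  "is_subgradient f z g \<longleftrightarrow> (\<forall>u. f z + inner g (u - z) \<le> f u)"

definition neighbours :: "'a list \<Rightarrow> 'a list set" where
  "neighbours D = {D[i := e] | i e. i < length D} - {D}"

definition twice_cont_diff :: "('a::euclidean_space \<Rightarrow> real) \<Rightarrow> bool" where
  "twice_cont_diff f \<longleftrightarrow>
     (\<exists>(D1 :: 'a \<Rightarrow> 'a \<Rightarrow>\<^sub>L real) (D2 :: 'a \<Rightarrow> 'a \<Rightarrow>\<^sub>L ('a \<Rightarrow>\<^sub>L real)).
        (\<forall>x. (f has_derivative blinfun_apply (D1 x)) (at x)) \<and>
        (\<forall>x. (D1 has_derivative blinfun_apply (D2 x)) (at x)) \<and>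
        continuous_on UNIV D2)"

text \<open>Distribution of a J x K matrix with i.i.d. Laplace(0, b) entries:
  joint density (1/(2b))^(JK) exp(-||xi||_1 / b). For b = 0 (degenerate scale)
  the noise is identically 0.\<close>
definition laplace_noise :: "real \<Rightarrow> (real^'k^'j) measure" where
  "laplace_noise b =
     (if 0 < b then
        density lborel (\<lambda>\<xi>. ennreal ((1 / (2 * b)) ^ (CARD('j) * CARD('k))
                                       * exp (- l1norm \<xi> / b)))
      else return borel 0)"

definition argmin_on :: "'a set \<Rightarrow> ('a \<Rightarrow> real) \<Rightarrow> 'a" where
  "argmin_on C G = (THE z. z \<in> C \<and> (\<forall>u\<in>C. G z \<le> G u))"

definition G_obj :: "real^'k^'j \<Rightarrow> real \<Rightarrow> real^'k^'j \<Rightarrow> real^'k^'j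
   \<Rightarrow> real^'k^'j \<Rightarrow> real^'k^'j \<Rightarrow> real" where
  "G_obj g \<rho> w lam \<xi> z = inner g z + \<rho> / 2 * (norm (w - z + (1 / \<rho>) *\<^sub>R (lam - \<xi>)))\<^sup>2"

end

theory Submission imports Defs begin

text \<open>The objective G differs from a quadratic in z that depends on the data only through
  f' + \<xi> by a term constant in z. Hence replacing the data by a neighbouring dataset amounts
  to translating the noise by the difference v of the two subgradients, whose l1-norm is at
  most \<Delta>. The Laplace density with scale \<Delta>/\<epsilon> changes by a factor of at most e^\<epsilon> under
  such a translation, and the translation invariance of Lebesgue measure turns this pointwise
  bound into the bound on probabilities.\<close>

lemma l1norm_nonneg: "0 \<le> l1norm (u::real^'k^'j)"
  unfolding l1norm_def by (intro sum_nonneg) auto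

lemma l1norm_eq_0_iff: "l1norm (u::real^'k^'j) = 0 \<longleftrightarrow> u = 0"
  unfolding l1norm_def by (simp add: sum_nonneg_eq_0_iff vec_eq_iff)

lemma l1norm_minus_cancel: "l1norm (- u) = l1norm (u::real^'k^'j)"
  unfolding l1norm_def by simp

lemma l1norm_triangle_diff: "l1norm x \<le> l1norm (x - u) + l1norm (u::real^'k^'j)"
proof -
  have "l1norm x \<le> (\<Sum>i\<in>UNIV. \<Sum>k\<in>UNIV. \<bar>(x - u) $ i $ k\<bar> + \<bar>u $ i $ k\<bar>)"
    unfolding l1norm_def by (intro sum_mono) auto
  then show ?thesis
    unfolding l1norm_def sum.distrib .
qed

lemma borel_measurable_l1norm: "l1norm \<in> borel_measurable (borel :: (real^'k^'j) measure)"
  unfolding l1norm_def[abs_def] by (intro borel_measurable_continuous_onI continuous_intros)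

lemma G_obj_expand:
  assumes "\<rho> \<noteq> 0"
  shows "G_obj g \<rho> w lam \<xi> z =
    inner (g + \<xi> - \<rho> *\<^sub>R w - lam) z + \<rho> / 2 * (norm z)\<^sup>2
      + \<rho> / 2 * (norm (w + (1 / \<rho>) *\<^sub>R (lam - \<xi>)))\<^sup>2"
proof -
  define a where "a = w + (1 / \<rho>) *\<^sub>R (lam - \<xi>)"
  have a: "w - z + (1 / \<rho>) *\<^sub>R (lam - \<xi>) = a - z"
    unfolding a_def by (simp add: algebra_simps)
  have norm_a_z: "(norm (a - z))\<^sup>2 = (norm a)\<^sup>2 - 2 * inner a z + (norm z)\<^sup>2"
    by (simp add: power2_norm_eq_inner inner_diff inner_commute)
  have "\<rho> * inner a z = \<rho> * inner w z + inner lam z - inner \<xi> z"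
    unfolding a_def using assms by (simp add: inner_add inner_diff algebra_simps)
  then show ?thesis
    unfolding G_obj_def a norm_a_z a_def[symmetric] by (simp add: inner_add inner_diff algebra_simps)
qed

lemma argmin_on_add_const: "argmin_on C (\<lambda>z. G z + c) = argmin_on C G"
  unfolding argmin_on_def by simp

lemma argmin_on_G_obj_shift:
  assumes "\<rho> \<noteq> 0" and "g + \<xi> = g' + \<xi>'"
  shows "argmin_on C (G_obj g \<rho> w lam \<xi>) = argmin_on C (G_obj g' \<rho> w lam \<xi>')"
proof -
  define c where "c = \<rho> / 2 * (norm (w + (1 / \<rho>) *\<^sub>R (lam - \<xi>)))\<^sup>2
    - \<rho> / 2 * (norm (w + (1 / \<rho>) *\<^sub>R (lam - \<xi>')))\<^sup>2"
  have "G_obj g \<rho> w lam \<xi> = (\<lambda>z. G_obj g' \<rho> w lam \<xi>' z + c)"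
    unfolding c_def G_obj_expand[OF assms(1)] assms(2) by (simp add: algebra_simps)
  then show ?thesis
    by (simp add: argmin_on_add_const)
qed

lemma emeasure_density_translate_le:
  fixes f :: "'a::euclidean_space \<Rightarrow> ennreal"
  assumes f: "f \<in> borel_measurable borel" and bound: "\<And>y. f (y - v) \<le> c * f y"
  shows "emeasure (density lborel f) {x. x + v \<in> A} \<le> c * emeasure (density lborel f) A"
proof (cases "A \<in> sets borel")
  case True
  have "{x. x + v \<in> A} = (\<lambda>x. x + v) -` A \<inter> space borel"
    by auto
  also have "\<dots> \<in> sets borel"
    using True by (intro measurable_sets) auto
  finally have "{x. x + v \<in> A} \<in> sets lborel"
    by simp
  then have "emeasure (density lborel f) {x. x + v \<in> A}
      = (\<integral>\<^sup>+x. f ((v + x) - v) * indicator A (v + x) \<partial>lborel)"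
    using f by (simp add: emeasure_density indicator_def add.commute)
  also have "\<dots> = (\<integral>\<^sup>+y. f (y - v) * indicator A y \<partial>distr lborel borel ((+) v))"
    using True f by (subst nn_integral_distr) auto
  also have "\<dots> = (\<integral>\<^sup>+y. f (y - v) * indicator A y \<partial>lborel)"
    by (simp add: lborel_distr_plus)
  also have "\<dots> \<le> (\<integral>\<^sup>+y. c * (f y * indicator A y) \<partial>lborel)"
    using bound by (intro nn_integral_mono) (auto simp: indicator_def)
  also have "\<dots> = c * emeasure (density lborel f) A"
    using True f by (simp add: nn_integral_cmult emeasure_density)
  finally show ?thesis .
next
  case False
  have "{x. x + v \<in> A} \<notin> sets borel"
  proof
    assume "{x. x + v \<in> A} \<in> sets borel"
    then have "(\<lambda>x. x - v) -` {x. x + v \<in> A} \<inter> space borel \<in> sets borel"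
      by (intro measurable_sets) auto
    then show False
      using False by simp
  qed
  then show ?thesis
    by (simp add: emeasure_notin_sets)
qed

text \<open>Both bounds are needed even for one real inequality: \<open>measure\<close> sends \<infinity> to 0, and
  each bound rules out that only one of the two sets has infinite measure.\<close>

lemma measure_bounds_of_emeasure_bounds:
  assumes BA: "emeasure \<mu> B \<le> ennreal (exp \<epsilon>) * emeasure \<mu> A"
    and AB: "emeasure \<mu> A \<le> ennreal (exp \<epsilon>) * emeasure \<mu> B"
  shows "exp (- \<epsilon>) * measure \<mu> A \<le> measure \<mu> B \<and> measure \<mu> B \<le> exp \<epsilon> * measure \<mu> A"
proof (cases "emeasure \<mu> A = \<infinity>")
  case True
  then have "emeasure \<mu> B = \<infinity>"
    using AB by (auto simp: ennreal_mult_eq_top_iff top_unique)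
  then show ?thesis
    using True by (simp add: measure_def)
next
  case False
  then have "emeasure \<mu> B \<noteq> \<infinity>"
    using BA by (auto simp: ennreal_mult_eq_top_iff top_unique)
  then have "ennreal (measure \<mu> B) \<le> ennreal (exp \<epsilon> * measure \<mu> A)"
      and "ennreal (measure \<mu> A) \<le> ennreal (exp \<epsilon> * measure \<mu> B)"
    using False BA AB by (simp_all add: emeasure_eq_ennreal_measure ennreal_mult)
  then have "measure \<mu> B \<le> exp \<epsilon> * measure \<mu> A" and "measure \<mu> A \<le> exp \<epsilon> * measure \<mu> B"
    by (simp_all add: ennreal_le_iff)
  then show ?thesis
    by (simp add: exp_minus field_simps)
qed

lemma laplace_noise_translate_bounds:
  fixes v :: "real^'k^'j"
  assumes "0 \<le> \<epsilon>" and v: "l1norm v \<le> \<epsilon> * b"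
  defines "\<mu> \<equiv> laplace_noise b :: (real^'k^'j) measure"
  shows "exp (- \<epsilon>) * measure \<mu> A \<le> measure \<mu> {x. x + v \<in> A}
    \<and> measure \<mu> {x. x + v \<in> A} \<le> exp \<epsilon> * measure \<mu> A"
proof (cases "0 < b")
  case True
  define f where "f \<xi> = ennreal ((1 / (2 * b)) ^ (CARD('j) * CARD('k)) * exp (- l1norm \<xi> / b))"
    for \<xi> :: "real^'k^'j"
  have \<mu>: "\<mu> = density lborel f"
    unfolding \<mu>_def laplace_noise_def f_def using True by simp
  have f_meas: "f \<in> borel_measurable borel"
    unfolding f_def using borel_measurable_l1norm by measurable
  have f_translate: "f (y - u) \<le> ennreal (exp \<epsilon>) * f y" if u: "l1norm u \<le> \<epsilon> * b" for y u
  proof -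
    have "l1norm y \<le> l1norm (y - u) + \<epsilon> * b"
      using l1norm_triangle_diff[of y u] u by linarith
    then have "- l1norm (y - u) / b \<le> \<epsilon> + - l1norm y / b"
      using True by (simp add: field_simps)
    then show ?thesis
      unfolding f_def using True
      by (simp add: exp_add[symmetric] ennreal_mult[symmetric] mult.left_commute ennreal_leI)
  qed
  have "emeasure \<mu> {x. x + v \<in> A} \<le> ennreal (exp \<epsilon>) * emeasure \<mu> A"
    unfolding \<mu> using f_meas f_translate[OF v] by (rule emeasure_density_translate_le)
  moreover have "emeasure \<mu> {x. x + - v \<in> {x. x + v \<in> A}}
      \<le> ennreal (exp \<epsilon>) * emeasure \<mu> {x. x + v \<in> A}"
    unfolding \<mu> using f_meas f_translate[of "- v"] v
    by (intro emeasure_density_translate_le) (simp_all add: l1norm_minus_cancel)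
  ultimately show ?thesis
    by (simp add: measure_bounds_of_emeasure_bounds)
next
  case False
  then have "\<epsilon> * b \<le> 0"
    using \<open>0 \<le> \<epsilon>\<close> by (simp add: mult_nonneg_nonpos)
  then have "v = 0"
    using v l1norm_nonneg[of v] l1norm_eq_0_iff[of v] by linarith
  have "exp (- \<epsilon>) \<le> 1" "1 \<le> exp \<epsilon>"
    using \<open>0 \<le> \<epsilon>\<close> by simp_all
  then show ?thesis
    using \<open>v = 0\<close> by (simp add: mult_left_le_one_le mult_le_cancel_right1)
qed

lemma space_laplace_noise [simp]: "space (laplace_noise b) = UNIV"
  by (simp add: laplace_noise_def)

theorem theorem3:
  fixes P :: nat and p :: nat
    and Ds :: "nat \<Rightarrow> ((real^'j) \<times> (real^'k)) list"
    and \<phi> :: "real^'k^'j \<Rightarrow> real^'j \<Rightarrow> real^'k \<Rightarrow> real"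
    and r :: "real^'k^'j \<Rightarrow> real"
    and \<beta> :: real
    and fsub :: "((real^'j) \<times> (real^'k)) list \<Rightarrow> real^'k^'j \<Rightarrow> real^'k^'j"
    and W :: "(real^'k^'j) set"
    and M :: nat and h :: "nat \<Rightarrow> real^'k^'j \<Rightarrow> real"
    and w_next lam_t z_t :: "real^'k^'j"
    and \<rho> \<delta> \<epsilon> \<Delta> :: real
  assumes P_pos: "0 < P" and p_lt: "p < P"
    and I_pos: "0 < (\<Sum>q<P. length (Ds q))"
    and \<phi>_convex: "\<And>x y. convex_on UNIV (\<lambda>z. \<phi> z x y)"
    and r_convex: "convex_on UNIV r"
    and \<beta>_pos: "0 < \<beta>"
    and fsub: "\<And>D z. is_subgradient
                 (local_obj (\<Sum>q<P. length (Ds q)) P \<beta> \<phi> r D) z (fsub D z)"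
    and W_compact: "compact W" and W_convex: "convex W"
    and h_convex: "\<And>m. m < M \<Longrightarrow> convex_on UNIV (h m)"
    and h_C2: "\<And>m. m < M \<Longrightarrow> twice_cont_diff (h m)"
    and h_repr: "W \<inter> cball z_t \<delta> = {z. \<forall>m<M. h m z \<le> 0}"
    and \<rho>_pos: "0 < \<rho>" and \<delta>_pos: "0 < \<delta>" and \<epsilon>_pos: "0 < \<epsilon>"
    and \<Delta>_max_exists: "\<exists>D0\<in>neighbours (Ds p). \<forall>D'\<in>neighbours (Ds p).
            l1norm (fsub (Ds p) z_t - fsub D' z_t) \<le> l1norm (fsub (Ds p) z_t - fsub D0 z_t)"
    and \<Delta>_def: "\<Delta> = (SUP D'\<in>neighbours (Ds p). l1norm (fsub (Ds p) z_t - fsub D' z_t))"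
  shows "\<forall>S \<in> sets borel. \<forall>D' \<in> neighbours (Ds p).
     (let zn = (\<lambda>D \<xi>. argmin_on (W \<inter> cball z_t \<delta>) (G_obj (fsub D z_t) \<rho> w_next lam_t \<xi>));
          Pr = (\<lambda>D. measure (laplace_noise (\<Delta> / \<epsilon>))
                     {\<xi> \<in> space (laplace_noise (\<Delta> / \<epsilon>)). zn D \<xi> \<in> S})
      in exp (- \<epsilon>) * Pr D' \<le> Pr (Ds p) \<and> Pr (Ds p) \<le> exp \<epsilon> * Pr D')"
proof (intro ballI)
  fix S :: "(real^'k^'j) set" and D'
  assume D': "D' \<in> neighbours (Ds p)"
  define v where "v = fsub (Ds p) z_t - fsub D' z_t"
  obtain D0 where D0: "D0 \<in> neighbours (Ds p)"
    "\<And>D'. D' \<in> neighbours (Ds p) \<Longrightarrow>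
      l1norm (fsub (Ds p) z_t - fsub D' z_t) \<le> l1norm (fsub (Ds p) z_t - fsub D0 z_t)"
    using \<Delta>_max_exists by blast
  have "\<Delta> = l1norm (fsub (Ds p) z_t - fsub D0 z_t)"
    unfolding \<Delta>_def using D0 by (intro cSup_eq_maximum) auto
  then have v: "l1norm v \<le> \<epsilon> * (\<Delta> / \<epsilon>)"
    unfolding v_def using D0(2)[OF D'] \<epsilon>_pos by simp
  have "argmin_on C (G_obj (fsub (Ds p) z_t) \<rho> w_next lam_t \<xi>)
      = argmin_on C (G_obj (fsub D' z_t) \<rho> w_next lam_t (\<xi> + v))" for C \<xi>
    using \<rho>_pos by (intro argmin_on_G_obj_shift) (auto simp: v_def)
  then show "let zn = (\<lambda>D \<xi>. argmin_on (W \<inter> cball z_t \<delta>) (G_obj (fsub D z_t) \<rho> w_next lam_t \<xi>));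
          Pr = (\<lambda>D. measure (laplace_noise (\<Delta> / \<epsilon>))
                     {\<xi> \<in> space (laplace_noise (\<Delta> / \<epsilon>)). zn D \<xi> \<in> S})
      in exp (- \<epsilon>) * Pr D' \<le> Pr (Ds p) \<and> Pr (Ds p) \<le> exp \<epsilon> * Pr D'"
    using laplace_noise_translate_bounds[OF less_imp_le[OF \<epsilon>_pos] v,
        where A = "{\<xi>. argmin_on (W \<inter> cball z_t \<delta>) (G_obj (fsub D' z_t) \<rho> w_next lam_t \<xi>) \<in> S}"]
    by (simp add: Let_def)
qed

end
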